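(* Let $q\ge2$ and let $D$ be a directed graph on $n$ vertices with an induced acyclic subgraph on $I$ vertices. If $D$ is $q$-solvable, then $n \ge I + q\left(1-\frac1q\right)^{I}$.
   Context: A directed graph $D=(V,E)$ has arcs $E \subseteq \{(u,v)\in V^2 : u \neq v\}$ (bidirectional pairs allowed). An induced subgraph is acyclic if it contains no directed cycle. $N^-(v)=\{u:(u,v)\in E\}$. For $q\ge2$ let $[q]=\{0,\dots,q-1\}$. A $D$-function over $[q]$ is a map $f=(f_v)_{v\in V}:[q]^V\to[q]^V$ with each $f_v(x)$ depending only on $(x_u)_{u\in N^-(v)}$. $D$ is $q$-solvable if some $D$-function $f$ over $[q]$ has the property that for every $x\in[q]^V$ there is $v$ with $f_v(x)=x_v$. *)

theory Defs
  imports Main Complex_Main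
begin

text \<open>A digraph on vertex type 'v is an arc set E without loops.
  Configurations over [q] = {0..<q} are maps x :: 'v => nat with x v < q.\<close>

definition configs :: "nat \<Rightarrow> ('v \<Rightarrow> nat) set" where
  "configs q = {x. \<forall>v. x v < q}"

definition in_nbrs :: "('v \<times> 'v) set \<Rightarrow> 'v \<Rightarrow> 'v set" where
  "in_nbrs E v = {u. (u, v) \<in> E}"

definition is_D_function :: "('v \<times> 'v) set \<Rightarrow> nat \<Rightarrow> ('v \<Rightarrow> ('v \<Rightarrow> nat) \<Rightarrow> nat) \<Rightarrow> bool" where
  "is_D_function E q f \<longleftrightarrow>
     (\<forall>x \<in> configs q. \<forall>v. f v x < q) \<and>
     (\<forall>v. \<forall>x \<in> configs q. \<forall>y \<in> configs q.
        (\<forall>u \<in> in_nbrs E v. x u = y u) \<longrightarrow> f v x = f v y)"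

definition q_solvable :: "('v \<times> 'v) set \<Rightarrow> nat \<Rightarrow> bool" where
  "q_solvable E q \<longleftrightarrow>
     (\<exists>f. is_D_function E q f \<and> (\<forall>x \<in> configs q. \<exists>v. f v x = x v))"

definition induced_acyclic :: "('v \<times> 'v) set \<Rightarrow> 'v set \<Rightarrow> bool" where
  "induced_acyclic E S \<longleftrightarrow> acyclic (E \<inter> (S \<times> S))"

end

theory Submission
  imports Defs "HOL-Library.FuncSet"
begin

(* Fix a solving D-function f and call x "unfixed at v" if f v x \<noteq> x v.
   (1) For a single vertex v, f v does not read coordinate v (no loops), so exactly
       a 1/q fraction of all configurations is fixed at v: q^(n-1) of them.
   (2) For a set T inducing an acyclic subgraph, the configurations unfixed on all
       of T form a (1-1/q)^|T| fraction: remove a sink s of T; the coordinate-s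
       fibres of the configurations unfixed on T - {s} are preserved, since no f v
       with v \<in> T - {s} reads x s, and in each fibre exactly one value is fixed at s.
   Solvability says every configuration unfixed on S is fixed at some v \<notin> S, so
   by (1) and (2) with T = S:  (q-1)^|S| q^n \<le> |V - S| q^(n-1) q^|S|, i.e.
   |V - S| \<ge> q (1-1/q)^|S|; adding |S| gives the corollary. *)

lemma configs_eq_PiE: "configs q = PiE (UNIV :: 'v::finite set) (\<lambda>_. {0..<q})"
  by (auto simp: configs_def PiE_def Pi_def extensional_def)

lemma finite_configs: "finite (configs q :: ('v::finite \<Rightarrow> nat) set)"
  unfolding configs_eq_PiE by (intro finite_PiE) auto

lemma card_configs: "card (configs q :: ('v::finite \<Rightarrow> nat) set) = q ^ card (UNIV :: 'v set)"
  unfolding configs_eq_PiE by (simp add: card_PiE)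

lemma configs_update: "x \<in> configs q \<Longrightarrow> c < q \<Longrightarrow> x(s := c) \<in> configs q"
  by (auto simp: configs_def)

text \<open>Fibre counting: if a set P of configurations is closed under rewriting
  coordinate s, and h is a [q]-valued function ignoring coordinate s, then
  x s = h x singles out exactly one configuration in each fibre, i.e. a 1/q fraction.\<close>

lemma card_coordinate_hits:
  fixes P :: "('v::finite \<Rightarrow> nat) set"
  assumes P_configs: "P \<subseteq> configs q"
    and closed: "\<And>x c. x \<in> P \<Longrightarrow> c < q \<Longrightarrow> x(s := c) \<in> P"
    and ignores: "\<And>x c. x \<in> P \<Longrightarrow> c < q \<Longrightarrow> h (x(s := c)) = h x"
    and h_range: "\<And>x. x \<in> P \<Longrightarrow> h x < q"
    and q_pos: "q > 0"
  shows "card {x\<in>P. x s = h x} * q = card P"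
proof -
  let ?P0 = "{x\<in>P. x s = 0}"
  have "bij_betw (\<lambda>x. x(s := 0)) {x\<in>P. x s = h x} ?P0"
    by (rule bij_betw_byWitness[where f' = "\<lambda>y. y(s := h y)"])
       (use ignores closed h_range q_pos in auto)
  hence hits_eq: "card {x\<in>P. x s = h x} = card ?P0"
    by (rule bij_betw_same_card)
  have inj: "inj_on (\<lambda>(y, c). y(s := c)) (?P0 \<times> {0..<q})"
  proof (rule inj_onI, clarify)
    fix y y' :: "'v \<Rightarrow> nat" and c c' :: nat
    assume "y s = 0" "y' s = 0" and eq: "y(s := c) = y'(s := c')"
    then have "\<forall>v. y v = y' v" using fun_cong[OF eq] by (metis fun_upd_other)
    then show "y = y' \<and> c = c'" using fun_cong[OF eq, of s] by auto
  qed
  have fibres: "P = (\<lambda>(y, c). y(s := c)) ` (?P0 \<times> {0..<q})"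
  proof
    show "P \<subseteq> (\<lambda>(y, c). y(s := c)) ` (?P0 \<times> {0..<q})"
    proof
      fix x assume x: "x \<in> P"
      have "x s < q" using x P_configs by (auto simp: configs_def)
      then show "x \<in> (\<lambda>(y, c). y(s := c)) ` (?P0 \<times> {0..<q})"
        using closed[OF x q_pos] by (intro image_eqI[where x = "(x(s := 0), x s)"]) auto
    qed
  qed (use closed in auto)
  have "card P = card ?P0 * q"
    by (subst fibres, subst card_image[OF inj]) (simp add: card_cartesian_product)
  with hits_eq show ?thesis by simp
qed

lemma acyclic_has_sink:
  assumes "finite T" "T \<noteq> {}" "acyclic (E \<inter> (T \<times> T))"
  shows "\<exists>s\<in>T. \<forall>u\<in>T. (s, u) \<notin> E"
proof -
  have "wf ((E \<inter> (T \<times> T))\<inverse>)"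
    by (rule finite_acyclic_wf_converse) (use assms in auto)
  then obtain s where "s \<in> T" and "\<And>u. (u, s) \<in> (E \<inter> (T \<times> T))\<inverse> \<Longrightarrow> u \<notin> T"
    using assms(2) unfolding wf_eq_minimal by blast
  then show ?thesis by blast
qed

lemma D_function_range:
  "is_D_function E q f \<Longrightarrow> x \<in> configs q \<Longrightarrow> f v x < q"
  unfolding is_D_function_def by blast

lemma D_function_update:
  assumes "is_D_function E q f" "x \<in> configs q" "c < q" "(s, v) \<notin> E"
  shows "f v (x(s := c)) = f v x"
proof -
  have "\<forall>u \<in> in_nbrs E v. (x(s := c)) u = x u"
    using assms(4) by (auto simp: in_nbrs_def)
  then show ?thesis
    using assms(1) configs_update[OF assms(2,3)] assms(2) unfolding is_D_function_def by blast
qed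

lemma card_fixed_at:
  fixes E :: "('v::finite \<times> 'v) set"
  assumes f: "is_D_function E q f" and loopless: "\<forall>v. (v, v) \<notin> E" and q_pos: "q > 0"
  shows "card {x\<in>configs q. x v = f v x} * q = q ^ card (UNIV :: 'v set)"
proof -
  have "card {x\<in>configs q. x v = f v x} * q = card (configs q :: ('v \<Rightarrow> nat) set)"
  proof (rule card_coordinate_hits)
    show "f v (x(v := c)) = f v x" if "x \<in> configs q" "c < q" for x c
      using D_function_update[OF f that] loopless by blast
  qed (use configs_update D_function_range[OF f] q_pos in auto)
  then show ?thesis by (simp add: card_configs)
qed

lemma card_unfixed_on_acyclic:
  fixes E :: "('v::finite \<times> 'v) set"
  assumes f: "is_D_function E q f" and loopless: "\<forall>v. (v, v) \<notin> E" and q_pos: "q > 0"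
    and acyclic_T: "acyclic (E \<inter> (T \<times> T))"
  shows "card {x\<in>configs q. \<forall>v\<in>T. f v x \<noteq> x v} * q ^ card T
           = (q - 1) ^ card T * q ^ card (UNIV :: 'v set)"
  using acyclic_T
proof (induction "card T" arbitrary: T)
  case 0
  then show ?case by (simp add: card_configs)
next
  case (Suc k)
  then obtain s where s: "s \<in> T" and sink: "\<forall>u\<in>T. (s, u) \<notin> E"
    using acyclic_has_sink[of T E] by fastforce
  let ?U = "{x\<in>configs q. \<forall>v\<in>T. f v x \<noteq> x v}"
  define A where "A = {x\<in>configs q. \<forall>v\<in>T - {s}. f v x \<noteq> x v}"
  have "acyclic (E \<inter> ((T - {s}) \<times> (T - {s})))"
    by (rule acyclic_subset[OF Suc.prems]) auto
  moreover have "k = card (T - {s})"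
    using Suc.hyps(2) s by simp
  ultimately have IH: "card A * q ^ k = (q - 1) ^ k * q ^ card (UNIV :: 'v set)"
    unfolding A_def using Suc.hyps(1) by blast
  have A_closed: "x(s := c) \<in> A" if "x \<in> A" "c < q" for x c
    using that sink D_function_update[OF f] configs_update by (auto simp: A_def)
  have hits: "card {x\<in>A. x s = f s x} * q = card A"
    by (rule card_coordinate_hits)
       (use A_closed D_function_update[OF f] loopless D_function_range[OF f] q_pos
         in \<open>auto simp: A_def\<close>)
  have "?U = A - {x\<in>A. x s = f s x}"
    using s by (auto simp: A_def)
  moreover have "finite A"
    using finite_configs by (rule rev_finite_subset) (auto simp: A_def)
  ultimately have step: "card ?U * q = card A * (q - 1)"
    using hits by (simp add: card_Diff_subset diff_mult_distrib2 mult.commute)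
  have "card ?U * q ^ Suc k = (card ?U * q) * q ^ k"
    by (simp add: mult.assoc)
  also have "\<dots> = (card A * q ^ k) * (q - 1)"
    unfolding step by (simp add: ac_simps)
  also have "\<dots> = (q - 1) ^ Suc k * q ^ card (UNIV :: 'v set)"
    unfolding IH by (simp add: ac_simps)
  finally show ?case
    unfolding Suc.hyps(2)[symmetric] .
qed

lemma solvable_count_bound:
  fixes E :: "('v::finite \<times> 'v) set"
  assumes q_pos: "q > 0" and loopless: "\<forall>v. (v, v) \<notin> E"
    and acyclic_S: "acyclic (E \<inter> (S \<times> S))" and solvable: "q_solvable E q"
  shows "(q - 1) ^ card S * q \<le> card (- S) * q ^ card S"
proof -
  obtain f where f: "is_D_function E q f" and solves: "\<forall>x\<in>configs q. \<exists>v. f v x = x v"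
    using solvable unfolding q_solvable_def by blast
  let ?n = "card (UNIV :: 'v set)"
  let ?unfixed = "{x\<in>configs q. \<forall>v\<in>S. f v x \<noteq> x v}"
  let ?fixed_at = "\<lambda>v. {x\<in>configs q. x v = f v x}"
  have "?unfixed \<subseteq> (\<Union>v\<in>-S. ?fixed_at v)"
  proof
    fix x assume x: "x \<in> ?unfixed"
    then obtain v where "f v x = x v"
      using solves by blast
    then have "v \<in> - S" and "x \<in> ?fixed_at v"
      using x by auto
    then show "x \<in> (\<Union>v\<in>-S. ?fixed_at v)"
      by blast
  qed
  then have "card ?unfixed \<le> card (\<Union>v\<in>-S. ?fixed_at v)"
    by (intro card_mono finite_subset[OF _ finite_configs]) auto
  also have "\<dots> \<le> (\<Sum>v\<in>-S. card (?fixed_at v))"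
    by (rule card_UN_le) simp
  finally have "card ?unfixed * q \<le> (\<Sum>v\<in>-S. card (?fixed_at v) * q)"
    by (simp add: sum_distrib_right[symmetric])
  also have "\<dots> = card (- S) * q ^ ?n"
    using card_fixed_at[OF f loopless q_pos] by simp
  finally have unfixed_le: "card ?unfixed * q \<le> card (- S) * q ^ ?n" .
  have "(q - 1) ^ card S * q * q ^ ?n = card ?unfixed * q * q ^ card S"
    using card_unfixed_on_acyclic[OF f loopless q_pos acyclic_S] by (simp add: ac_simps)
  also have "\<dots> \<le> card (- S) * q ^ ?n * q ^ card S"
    using unfixed_le by simp
  finally have "(q - 1) ^ card S * q * q ^ ?n \<le> (card (- S) * q ^ card S) * q ^ ?n"
    by (simp add: ac_simps)
  then show ?thesis
    using q_pos by simp
qed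

theorem corollary14:
  fixes E :: "('v::finite \<times> 'v) set" and S :: "'v set" and q :: nat
  assumes "q \<ge> 2"
    and "\<forall>v. (v, v) \<notin> E"
    and "induced_acyclic E S"
    and "q_solvable E q"
  shows "real (card (UNIV :: 'v set)) \<ge> real (card S) + real q * (1 - 1 / real q) ^ card S"
proof -
  have q_pos: "real q > 0" using assms(1) by simp
  have "(q - 1) ^ card S * q \<le> card (- S) * q ^ card S"
    using assms unfolding induced_acyclic_def by (intro solvable_count_bound) auto
  moreover have "real (q - 1) = real q - 1"
    using assms(1) by simp
  ultimately have "(real q - 1) ^ card S * real q \<le> real (card (- S)) * real q ^ card S"
    by (metis of_nat_le_iff of_nat_mult of_nat_power)
  moreover have "1 - 1 / real q = (real q - 1) / real q"
    using q_pos by (simp add: field_simps)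
  ultimately have "real q * (1 - 1 / real q) ^ card S \<le> real (card (- S))"
    using q_pos by (simp add: power_divide divide_le_eq mult.commute)
  moreover have "card (UNIV :: 'v set) = card S + card (- S)"
    using card_Un_disjoint[of S "- S"] by simp
  ultimately show ?thesis by simp
qed

end
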